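(* Let $n\ge 2$ and let $\mathcal{P}_E^c(Q_{4n})$ be the conjugacy super enhanced power graph of the generalized quaternion group $Q_{4n}$. (i) If $n$ is odd, the Sombor spectrum of $\mathcal{P}_E^c(Q_{4n})$ consists of $-(4n-1)\sqrt2$ with multiplicity $1$, $-(2n-1)\sqrt2$ with multiplicity $2n-3$, $-(2n+1)\sqrt2$ with multiplicity $2n-1$, and the three roots (with multiplicity) of \[\big(x-(4n-1)\sqrt2\big)\big(x-(2n-1)(2n-3)\sqrt2\big)\big(x-(2n-1)(2n+1)\sqrt2\big)-8(n-1)(10n^2-6n+1)\big(x-(2n-1)(2n+1)\sqrt2\big)-8n(10n^2-2n+1)\big(x-(2n-1)(2n-3)\sqrt2\big).\] (ii) If $n$ is even, the Sombor spectrum consists of $-(4n-1)\sqrt2$ with multiplicity $1$, $-(2n-1)\sqrt2$ with multiplicity $2n-3$, $-(n+1)\sqrt2$ with multiplicity $2n-2$, $(n^2-1)\sqrt2$ with multiplicity $1$, and the three roots (with multiplicity) of \[\big(x-(4n-1)\sqrt2\big)\big(x-(n-1)(n+1)\sqrt2\big)\big(x-(2n-1)(2n-3)\sqrt2\big)-8(n-1)(10n^2-6n+1)\big(x-(n-1)(n+1)\sqrt2\big)-4n(17n^2-6n+2)\big(x-(2n-3)(2n-1)\sqrt2\big).\]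
   Context: For a finite simple graph $\Gamma$ with vertices $u_1,\dots,u_N$, the Sombor matrix $S(\Gamma)$ has $(i,j)$ entry $\sqrt{\deg(u_i)^2+\deg(u_j)^2}$ if $u_i,u_j$ are adjacent and $0$ otherwise; the Sombor spectrum is the multiset of its eigenvalues. $Q_{4n}=\langle a,b: a^{2n}=e,\ a^n=b^2,\ ba=a^{-1}b\rangle$. The enhanced power graph $\mathcal{P}_E(G)$ has vertex set $G$, distinct vertices adjacent iff they lie in a common cyclic subgroup. The conjugacy super enhanced power graph $\mathcal{P}_E^c(G)$ has vertex set $G$, and distinct $g,h$ are adjacent iff $g,h$ are conjugate or there exist $g'$ conjugate to $g$ and $h'$ conjugate to $h$ adjacent in $\mathcal{P}_E(G)$. *)

theory Defs
  imports "HOL-Algebra.Group" "HOL-Algebra.Generated_Groups" "Jordan_Normal_Form.Char_Poly"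
begin

text \<open>Concrete model of Q_{4n}: the pair (i,j) with i < 2n, j < 2 stands for a^i b^j.
  Multiplication uses b^j a^k = a^((-1)^j k) b^j and b^2 = a^n.\<close>
definition Q4n_mult :: "nat \<Rightarrow> nat \<times> nat \<Rightarrow> nat \<times> nat \<Rightarrow> nat \<times> nat" where
  "Q4n_mult n x y =
     ((fst x + (if snd x = 0 then fst y else 2*n - fst y)
         + (if snd x = 1 \<and> snd y = 1 then n else 0)) mod (2*n),
      (snd x + snd y) mod 2)"

definition Q4n :: "nat \<Rightarrow> (nat \<times> nat) monoid" where
  "Q4n n = \<lparr> carrier = {0..<2*n} \<times> {0..<2}, monoid.mult = Q4n_mult n, monoid.one = (0,0) \<rparr>"

definition conjugate_in :: "('g, 'b) monoid_scheme \<Rightarrow> 'g \<Rightarrow> 'g \<Rightarrow> bool" where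
  "conjugate_in G g h \<longleftrightarrow> (\<exists>x\<in>carrier G. h = x \<otimes>\<^bsub>G\<^esub> g \<otimes>\<^bsub>G\<^esub> inv\<^bsub>G\<^esub> x)"

definition enh_power_adj :: "('g, 'b) monoid_scheme \<Rightarrow> 'g \<Rightarrow> 'g \<Rightarrow> bool" where
  "enh_power_adj G g h \<longleftrightarrow> g \<in> carrier G \<and> h \<in> carrier G \<and> g \<noteq> h \<and>
     (\<exists>c\<in>carrier G. g \<in> generate G {c} \<and> h \<in> generate G {c})"

definition conj_super_enh_adj :: "('g, 'b) monoid_scheme \<Rightarrow> 'g \<Rightarrow> 'g \<Rightarrow> bool" where
  "conj_super_enh_adj G g h \<longleftrightarrow> g \<in> carrier G \<and> h \<in> carrier G \<and> g \<noteq> h \<and>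
     (conjugate_in G g h \<or>
      (\<exists>g' h'. conjugate_in G g g' \<and> conjugate_in G h h' \<and> enh_power_adj G g' h'))"

definition graph_deg :: "'v set \<Rightarrow> ('v \<Rightarrow> 'v \<Rightarrow> bool) \<Rightarrow> 'v \<Rightarrow> nat" where
  "graph_deg V E v = card {w \<in> V. E v w}"

definition sombor_matrix :: "nat \<Rightarrow> (nat \<Rightarrow> 'v) \<Rightarrow> 'v set \<Rightarrow> ('v \<Rightarrow> 'v \<Rightarrow> bool) \<Rightarrow> real mat" where
  "sombor_matrix N vs V E = mat N N (\<lambda>(i,j).
     if E (vs i) (vs j)
     then sqrt (real (graph_deg V E (vs i)) ^ 2 + real (graph_deg V E (vs j)) ^ 2)
     else 0)"

definition sombor_spectrum :: "nat \<Rightarrow> (nat \<Rightarrow> 'v) \<Rightarrow> 'v set \<Rightarrow> ('v \<Rightarrow> 'v \<Rightarrow> bool) \<Rightarrow> real multiset" where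
  "sombor_spectrum N vs V E = proots (char_poly (sombor_matrix N vs V E))"

definition Q4n_enum :: "nat \<Rightarrow> nat \<Rightarrow> nat \<times> nat" where
  "Q4n_enum n k = (k mod (2*n), k div (2*n))"

definition Q4n_CSEPG_spectrum :: "nat \<Rightarrow> real multiset" where
  "Q4n_CSEPG_spectrum n =
     sombor_spectrum (4*n) (Q4n_enum n) (carrier (Q4n n)) (conj_super_enh_adj (Q4n n))"

end

theory Submission
  imports Defs
begin

text \<open>
  Sort the elements of Q_4n into classes: the centre {1, a^n}, the other powers of a, and the
  elements a^i b, which form one class for odd n and two classes (by the parity of i) for even n.
  Conjugation preserves the classes and every cyclic subgroup lies in the centre together with a
  single class; conversely the cyclic groups <a> and <a^i b> = {1, a^n, a^i b, a^(i+n) b},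
  together with conjugation by powers of a, connect any two elements of a class. So two distinct
  vertices are adjacent iff one of them is central or both lie in the same class, and the Sombor
  matrix is constant on the blocks of the class partition, with zero diagonal.

  Writing such a matrix as D - P R with P the class-indicator matrix, the identity
  det (1 - A B) = det (1 - B A) shows that its characteristic polynomial is
  prod_j (x + w_jj)^(s_j - 1) times the characteristic polynomial of the quotient matrix of the
  partition (s_j the class sizes, w_jj the weight inside class j). Here the quotient matrix is a
  3 x 3 or 4 x 4 arrow matrix, whose characteristic polynomial is the cubic of the statement,
  times x - (n^2 - 1) sqrt 2 for even n.
\<close>

lemma det_one_minus_mult_commute:
  fixes A :: "'a :: idom mat"
  assumes A: "A \<in> carrier_mat n k" and B: "B \<in> carrier_mat k n"
  shows "det (1\<^sub>m n - A * B) = det (1\<^sub>m k - B * A)"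
proof -
  let ?M = "four_block_mat (1\<^sub>m n) A B (1\<^sub>m k)"
  let ?L = "four_block_mat (1\<^sub>m n) (-A) (0\<^sub>m k n) (1\<^sub>m k)"
  let ?R = "four_block_mat (1\<^sub>m n) (0\<^sub>m n k) (-B) (1\<^sub>m k)"
  have M: "?M \<in> carrier_mat (n+k) (n+k)" and L: "?L \<in> carrier_mat (n+k) (n+k)"
    and R: "?R \<in> carrier_mat (n+k) (n+k)" using A B by auto
  have "det ?L = 1" "det ?R = 1"
    by (subst det_four_block_mat_lower_left_zero[of _ n _ k] 
        det_four_block_mat_upper_right_zero[of _ n _ k]; use A B in auto)+
  have "det ?M = det (?M * ?L)"
    using det_mult[OF M L] \<open>det ?L = 1\<close> by simp
  also have "?M * ?L = four_block_mat (1\<^sub>m n) (0\<^sub>m n k) B (1\<^sub>m k - B * A)"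
    by (subst mult_four_block_mat[of _ n n _ k]) (use A B in \<open>auto simp: mult_minus_distrib_mat\<close>)
  also have "det \<dots> = det (1\<^sub>m k - B * A)"
    by (subst det_four_block_mat_upper_right_zero[of _ n _ k]) (use A B in auto)
  finally have "det ?M = det (1\<^sub>m k - B * A)" .
  have "det ?M = det (?M * ?R)"
    using det_mult[OF M R] \<open>det ?R = 1\<close> by simp
  also have "?M * ?R = four_block_mat (1\<^sub>m n - A * B) A (0\<^sub>m k n) (1\<^sub>m k)"
    by (subst mult_four_block_mat[of _ n n _ k]) (use A B in \<open>auto simp: mult_minus_distrib_mat\<close>)
  also have "det \<dots> = det (1\<^sub>m n - A * B)"
    by (subst det_four_block_mat_lower_left_zero[of _ n _ k]) (use A B in auto)
  finally show ?thesis using \<open>det ?M = det (1\<^sub>m k - B * A)\<close> by simp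
qed

lemma det_mat_diag: "det (mat_diag N f) = (\<Prod>u<N. f u :: 'a :: comm_ring_1)"
  by (subst det_upper_triangular[of _ N])
     (auto simp: mat_diag_def upper_triangular_def prod_list_diag_prod atLeast0LessThan)

lemma det_class_constant_mat:
  fixes W :: "nat \<Rightarrow> nat \<Rightarrow> 'a::field" and d :: "nat \<Rightarrow> 'a" and cls :: "nat \<Rightarrow> nat"
  assumes cls: "\<And>u. u < N \<Longrightarrow> cls u < k" and d: "\<And>j. j < k \<Longrightarrow> d j \<noteq> 0"
  shows "det (mat N N (\<lambda>(u,v). (if u = v then d (cls u) else 0) - W (cls u) (cls v))) * (\<Prod>j<k. d j)
    = (\<Prod>u<N. d (cls u))
      * det (mat k k (\<lambda>(i,j). (if i = j then d i else 0) - W i j * of_nat (card {u. u < N \<and> cls u = j})))"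
proof -
  define s where "s j = (of_nat (card {u. u < N \<and> cls u = j}) :: 'a)" for j
  define A where "A = mat N k (\<lambda>(u,j). if cls u = j then 1 / d j else 0)"
  define B where "B = mat k N (\<lambda>(i,v). W i (cls v))"
  have A: "A \<in> carrier_mat N k" and B: "B \<in> carrier_mat k N" by (auto simp: A_def B_def)
  have AB: "A * B = mat N N (\<lambda>(u,v). W (cls u) (cls v) / d (cls u))"
    by (rule eq_matI) (auto simp: A_def B_def scalar_prod_def if_distrib[of "\<lambda>x. x * _"] cls cong: if_cong)
  have BA: "B * A = mat k k (\<lambda>(i,j). W i j * s j / d j)"
  proof (rule eq_matI)
    fix i j assume "i < dim_row (mat k k (\<lambda>(i,j). W i j * s j / d j))"
      and "j < dim_col (mat k k (\<lambda>(i,j). W i j * s j / d j))"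
    hence ij: "i < k" "j < k" by auto
    have "(B * A) $$ (i,j) = (\<Sum>u<N. if cls u = j then W i j / d j else 0)"
      using ij by (auto simp: A_def B_def scalar_prod_def atLeast0LessThan intro!: sum.cong)
    also have "\<dots> = (\<Sum>u\<in>{u. u < N \<and> cls u = j}. W i j / d j)"
      by (simp add: sum.inter_filter[symmetric] lessThan_def conj_commute)
    finally show "(B * A) $$ (i,j) = mat k k (\<lambda>(i,j). W i j * s j / d j) $$ (i,j)"
      using ij by (simp add: s_def)
  qed (auto simp: A_def B_def)
  have M: "mat N N (\<lambda>(u,v). (if u = v then d (cls u) else 0) - W (cls u) (cls v))
      = mat_diag N (d \<circ> cls) * (1\<^sub>m N - A * B)"
    by (subst mat_diag_mult_left[of _ N N]) (auto simp: AB right_diff_distrib d cls)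
  have Q: "mat k k (\<lambda>(i,j). (if i = j then d i else 0) - W i j * s j)
      = (1\<^sub>m k - B * A) * mat_diag k d"
    by (subst mat_diag_mult_right[of _ k k]) (auto simp: BA left_diff_distrib d)
  have "det (mat_diag N (d \<circ> cls) * (1\<^sub>m N - A * B)) = (\<Prod>u<N. d (cls u)) * det (1\<^sub>m N - A * B)"
    using A B by (subst det_mult[of _ N]) (auto simp: det_mat_diag)
  moreover have "det ((1\<^sub>m k - B * A) * mat_diag k d) = det (1\<^sub>m k - B * A) * (\<Prod>j<k. d j)"
    using A B by (subst det_mult[of _ k]) (auto simp: det_mat_diag)
  moreover have "det (1\<^sub>m N - A * B) = det (1\<^sub>m k - B * A)"
    by (rule det_one_minus_mult_commute[OF A B])
  ultimately show ?thesis
    unfolding s_def[symmetric] M Q by simp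
qed

lemma prod_lessThan_by_class:
  fixes f :: "nat \<Rightarrow> 'a :: comm_monoid_mult" and cls :: "nat \<Rightarrow> nat"
  assumes "\<And>u. u < N \<Longrightarrow> cls u < k"
  shows "(\<Prod>u<N. f (cls u)) = (\<Prod>j<k. f j ^ card {u. u < N \<and> cls u = j})"
proof -
  have "cls ` {..<N} \<subseteq> {..<k}" using assms by auto
  with prod.group[of "{..<N}" "{..<k}" cls "f \<circ> cls"] show ?thesis by auto
qed

lemma poly_eqI_cofinite:
  fixes p q :: "'a :: {idom, ring_char_0} poly"
  assumes "finite F" and "\<And>x. x \<notin> F \<Longrightarrow> poly p x = poly q x"
  shows "p = q"
proof (rule ccontr)
  assume "p \<noteq> q"
  then have "finite {x. poly (p - q) x = 0}" by (intro poly_roots_finite) simp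
  moreover have "- F \<subseteq> {x. poly (p - q) x = 0}" using assms(2) by auto
  ultimately have "finite (UNIV :: 'a set)"
    using assms(1) by (metis finite_Un finite_subset Compl_partition2)
  then show False using infinite_UNIV_char_0 by blast
qed

text \<open>Entry (i, j) is the total weight from a vertex of class i to the other vertices of class j.\<close>

definition class_quotient_mat :: "nat \<Rightarrow> (nat \<Rightarrow> nat) \<Rightarrow> nat \<Rightarrow> (nat \<Rightarrow> nat \<Rightarrow> 'a::semiring_1) \<Rightarrow> 'a mat" where
  "class_quotient_mat N cls k W =
    mat k k (\<lambda>(i,j). W i j * of_nat (card {u. u < N \<and> cls u = j} - (if i = j then 1 else 0)))"

lemma char_poly_class_constant:
  fixes W :: "nat \<Rightarrow> nat \<Rightarrow> 'a::{field, ring_char_0}" and cls :: "nat \<Rightarrow> nat"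
  assumes cls: "\<And>u. u < N \<Longrightarrow> cls u < k"
    and nonempty: "\<And>j. j < k \<Longrightarrow> \<exists>u<N. cls u = j"
  shows "char_poly (mat N N (\<lambda>(u,v). if u = v then 0 else W (cls u) (cls v)))
    = (\<Prod>j<k. [:W j j, 1:] ^ (card {u. u < N \<and> cls u = j} - 1)) * char_poly (class_quotient_mat N cls k W)"
  (is "char_poly ?S = ?P * char_poly ?B")
proof (rule poly_eqI_cofinite)
  let ?s = "\<lambda>j. card {u. u < N \<and> cls u = j}"
  show "finite ((\<lambda>j. - W j j) ` {..<k})" by simp
  fix x assume x_notin: "x \<notin> (\<lambda>j. - W j j) ` {..<k}"
  define d where "d j = x + W j j" for j
  have d: "d j \<noteq> 0" if "j < k" for j
  proof
    assume "d j = 0"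
    then have "x = - W j j" by (simp add: d_def eq_neg_iff_add_eq_0)
    with that x_notin show False by auto
  qed
  have s: "1 \<le> ?s j" if "j < k" for j
    using nonempty[OF that] by (auto simp: Suc_le_eq card_gt_0_iff)
  then have s': "of_nat (?s j - Suc 0) = (of_nat (?s j) - 1 :: 'a)" if "j < k" for j
    using that by (simp add: of_nat_diff)
  have "poly (char_poly ?S) x = det (mat N N (\<lambda>(u,v). (if u = v then d (cls u) else 0) - W (cls u) (cls v)))"
    by (subst char_poly_matrix[of _ N]) (auto simp: d_def char_matrix_def intro!: arg_cong[of _ _ det])
  moreover have "poly (char_poly ?B) x
      = det (mat k k (\<lambda>(i,j). (if i = j then d i else 0) - W i j * of_nat (?s j)))"
    by (subst char_poly_matrix[of _ k])
       (auto simp: d_def char_matrix_def class_quotient_mat_def s' algebra_simps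
        intro!: arg_cong[of _ _ det] eq_matI)
  moreover have "(\<Prod>u<N. d (cls u)) = (\<Prod>j<k. d j ^ (?s j - 1)) * (\<Prod>j<k. d j)"
  proof -
    have "(\<Prod>u<N. d (cls u)) = (\<Prod>j<k. d j ^ ?s j)" by (rule prod_lessThan_by_class[OF cls])
    also have "\<dots> = (\<Prod>j<k. d j ^ (?s j - 1) * d j)"
      using s by (intro prod.cong) (auto simp: Suc_le_eq power_minus_mult[unfolded One_nat_def])
    finally show ?thesis by (simp only: prod.distrib)
  qed
  ultimately show "poly (char_poly ?S) x = poly (?P * char_poly ?B) x"
    using det_class_constant_mat[of N cls k d W] cls d
    by (simp add: poly_prod d_def add.commute prod_zero_iff)
qed

lemma char_poly_neq_0: "A \<in> carrier_mat n n \<Longrightarrow> char_poly A \<noteq> 0"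
  using degree_monic_char_poly[of A n] by (metis coeff_0 zero_neq_one)

lemma proots_prod_linear_powers_mult:
  fixes c :: "'b \<Rightarrow> 'a :: idom"
  assumes "p \<noteq> 0"
  shows "proots ((\<Prod>j\<in>A. [:c j, 1:] ^ m j) * p) = (\<Sum>j\<in>A. replicate_mset (m j) (- c j)) + proots p"
proof -
  have "(\<Prod>j\<in>A. [:c j, 1:] ^ m j) \<noteq> 0"
    by (induction A rule: infinite_finite_induct) auto
  then show ?thesis using assms by (simp add: proots_mult proots_prod proots_power)
qed

lemma det_mat_Suc:
  "det (mat (Suc n) (Suc n) g) =
    (\<Sum>j<Suc n. g (0,j) * (-1)^j * det (mat n n (\<lambda>(a,b). g (Suc a, if b < j then b else Suc b))))"
proof -
  have "mat_delete (mat (Suc n) (Suc n) g) 0 j = mat n n (\<lambda>(a,b). g (Suc a, if b < j then b else Suc b))"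
    if "j < Suc n" for j
    using that by (intro eq_matI) (auto simp: mat_delete_def insert_index_def)
  then show ?thesis
    by (subst laplace_expansion_row[of _ "Suc n" 0]) (auto simp: cofactor_def intro!: sum.cong)
qed

lemma det_mat_2: "det (mat 2 2 g) = g (0,0) * g (1,1) - g (0,1) * (g (1,0) :: 'a :: comm_ring_1)"
  by (simp add: numeral_2_eq_2 det_mat_Suc det_single)

lemma det_mat_3:
  "det (mat 3 3 g) = g (0,0) * (g (1,1) * g (2,2) - g (1,2) * g (2,1))
    - g (0,1) * (g (1,0) * g (2,2) - g (1,2) * g (2,0))
    + g (0,2) * (g (1,0) * g (2,1) - g (1,1) * (g (2,0) :: 'a :: comm_ring_1))"
  by (simp add: numeral_3_eq_3 det_mat_Suc det_mat_2[unfolded numeral_2_eq_2] lessThan_Suc numeral_2_eq_2)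

lemma det_arrow_mat_4:
  fixes g :: "nat \<times> nat \<Rightarrow> 'a :: comm_ring_1"
  assumes "g (1,2) = 0" "g (1,3) = 0" "g (2,1) = 0" "g (2,3) = 0" "g (3,1) = 0" "g (3,2) = 0"
  shows "det (mat 4 4 g) = g (0,0) * g (1,1) * g (2,2) * g (3,3) - g (0,1) * g (1,0) * g (2,2) * g (3,3)
    - g (0,2) * g (2,0) * g (1,1) * g (3,3) - g (0,3) * g (3,0) * g (1,1) * g (2,2)"
proof -
  have "det (mat 4 4 g) =
    (\<Sum>j<4. g (0,j) * (-1)^j * det (mat 3 3 (\<lambda>(a,b). g (Suc a, if b < j then b else Suc b))))"
    using det_mat_Suc[of 3 g] by (simp add: numeral_eq_Suc)
  then show ?thesis
    unfolding det_mat_3 using assms by (simp add: lessThan_nat_numeral algebra_simps eval_nat_numeral)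
qed

definition class_related :: "nat \<Rightarrow> nat \<Rightarrow> bool" where
  "class_related i j \<longleftrightarrow> i = 0 \<or> j = 0 \<or> i = j"

lemma graph_deg_class_related:
  assumes "finite V" "g \<in> V"
    and E: "\<And>h. h \<in> V \<Longrightarrow> E g h \<longleftrightarrow> g \<noteq> h \<and> class_related (cl g) (cl h)"
  shows "graph_deg V E g =
    (if cl g = 0 then card V - 1 else card {h \<in> V. cl h = 0} + card {h \<in> V. cl h = cl g} - 1)"
proof (cases "cl g = 0")
  case True
  then have "{h \<in> V. E g h} = V - {g}" using E by (auto simp: class_related_def)
  then show ?thesis using True assms by (simp add: graph_deg_def)
next
  case False
  then have "{h \<in> V. E g h} = ({h \<in> V. cl h = 0} \<union> {h \<in> V. cl h = cl g}) - {g}"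
    using E by (auto simp: class_related_def)
  moreover have "card ({h \<in> V. cl h = 0} \<union> {h \<in> V. cl h = cl g})
      = card {h \<in> V. cl h = 0} + card {h \<in> V. cl h = cl g}"
    using False assms(1) by (intro card_Un_disjoint) auto
  ultimately show ?thesis using False assms(1,2) by (simp add: graph_deg_def)
qed

definition class_sombor_weight :: "(nat \<Rightarrow> nat) \<Rightarrow> nat \<Rightarrow> nat \<Rightarrow> real" where
  "class_sombor_weight \<delta> i j =
    (if class_related i j then sqrt (real (\<delta> i) ^ 2 + real (\<delta> j) ^ 2) else 0)"

lemma class_sombor_weight_diag: "class_sombor_weight \<delta> j j = real (\<delta> j) * sqrt 2"
proof -
  have "real (\<delta> j) ^ 2 + real (\<delta> j) ^ 2 = 2 * real (\<delta> j) ^ 2" by simp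
  then show ?thesis by (simp add: class_sombor_weight_def class_related_def real_sqrt_mult)
qed

lemma class_sombor_weight_sym: "class_sombor_weight \<delta> i j = class_sombor_weight \<delta> j i"
  by (auto simp: class_sombor_weight_def class_related_def add.commute)

lemma class_sombor_weight_centre_sq:
  "class_sombor_weight \<delta> 0 j * class_sombor_weight \<delta> 0 j = real (\<delta> 0) ^ 2 + real (\<delta> j) ^ 2"
  by (simp add: class_sombor_weight_def class_related_def)

lemma class_sombor_weight_unrelated:
  "i \<noteq> 0 \<Longrightarrow> j \<noteq> 0 \<Longrightarrow> i \<noteq> j \<Longrightarrow> class_sombor_weight \<delta> i j = 0"
  by (simp add: class_sombor_weight_def class_related_def)

lemma sombor_matrix_class_related:
  assumes bij: "bij_betw vs {..<N} V"
    and E: "\<And>g h. g \<in> V \<Longrightarrow> h \<in> V \<Longrightarrow> E g h \<longleftrightarrow> g \<noteq> h \<and> class_related (cl g) (cl h)"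
    and deg: "\<And>g. g \<in> V \<Longrightarrow> graph_deg V E g = \<delta> (cl g)"
  shows "sombor_matrix N vs V E =
    mat N N (\<lambda>(u,v). if u = v then 0 else class_sombor_weight \<delta> (cl (vs u)) (cl (vs v)))"
proof (rule eq_matI)
  fix u v assume "u < dim_row (mat N N (\<lambda>(u,v). if u = v then 0 else class_sombor_weight \<delta> (cl (vs u)) (cl (vs v))))"
    "v < dim_col (mat N N (\<lambda>(u,v). if u = v then 0 else class_sombor_weight \<delta> (cl (vs u)) (cl (vs v))))"
  then have uv: "u < N" "v < N" by auto
  then have "vs u \<in> V" "vs v \<in> V" "vs u = vs v \<longleftrightarrow> u = v"
    using bij unfolding bij_betw_def inj_on_def by auto
  then show "sombor_matrix N vs V E $$ (u,v) =
    mat N N (\<lambda>(u,v). if u = v then 0 else class_sombor_weight \<delta> (cl (vs u)) (cl (vs v))) $$ (u,v)"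
    using uv E deg by (simp add: sombor_matrix_def class_sombor_weight_def)
qed (simp_all add: sombor_matrix_def)

lemma carrier_Q4n [simp]: "carrier (Q4n n) = {0..<2*n} \<times> {0, 1}"
  and one_Q4n [simp]: "\<one>\<^bsub>Q4n n\<^esub> = (0,0)"
  and mult_Q4n [simp]: "x \<otimes>\<^bsub>Q4n n\<^esub> y = Q4n_mult n x y"
  by (auto simp: Q4n_def)

lemma mod_eq_if_less_3_mult:
  "(a::nat) < 3*m \<Longrightarrow> a mod m = (if a < m then a else if a < 2*m then a - m else a - 2*m)"
  by (auto simp: le_mod_geq not_less)

lemma Q4n_mult_eval:
  assumes "i < 2*n" "j < 2*n"
  shows "Q4n_mult n (i,0) (j,0) = (if i + j < 2*n then i + j else i + j - 2*n, 0)"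
    and "Q4n_mult n (i,0) (j,1) = (if i + j < 2*n then i + j else i + j - 2*n, 1)"
    and "Q4n_mult n (i,1) (j,0) = (if j \<le> i then i - j else i + 2*n - j, 1)"
    and "Q4n_mult n (i,1) (j,1) =
      (if i + 3*n - j < 2*n then i + 3*n - j else if i + 3*n - j < 4*n then i + n - j else i - j - n, 0)"
  using assms by (simp_all add: Q4n_mult_def mod_eq_if_less_3_mult) arith

lemmas Q4n_mult_table = Q4n_mult_eval Q4n_mult_eval[unfolded One_nat_def]

lemma Q4n_inv_rot:
  assumes "i < 2*n" shows "inv\<^bsub>Q4n n\<^esub> (i,0) = (if i = 0 then 0 else 2*n - i, 0)"
  unfolding m_inv_def
proof (rule the_equality)
  fix y assume "y \<in> carrier (Q4n n) \<and> (i,0) \<otimes>\<^bsub>Q4n n\<^esub> y = \<one>\<^bsub>Q4n n\<^esub> \<and> y \<otimes>\<^bsub>Q4n n\<^esub> (i,0) = \<one>\<^bsub>Q4n n\<^esub>"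
  moreover from this obtain a b where "y = (a,b)" "a < 2*n" "b = 0 \<or> b = 1" by force
  ultimately show "y = (if i = 0 then 0 else 2*n - i, 0)"
    using assms by (auto simp: Q4n_mult_table split: if_splits)
qed (use assms in \<open>auto simp: Q4n_mult_table\<close>)

lemma Q4n_inv_refl:
  assumes "i < 2*n" shows "inv\<^bsub>Q4n n\<^esub> (i,1) = (if i < n then i + n else i - n, 1)"
  unfolding m_inv_def
proof (rule the_equality)
  fix y assume "y \<in> carrier (Q4n n) \<and> (i,1) \<otimes>\<^bsub>Q4n n\<^esub> y = \<one>\<^bsub>Q4n n\<^esub> \<and> y \<otimes>\<^bsub>Q4n n\<^esub> (i,1) = \<one>\<^bsub>Q4n n\<^esub>"
  moreover from this obtain a b where "y = (a,b)" "a < 2*n" "b = 0 \<or> b = 1" by force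
  ultimately show "y = (if i < n then i + n else i - n, 1)"
    using assms by (auto simp: Q4n_mult_table split: if_splits)
qed (use assms in \<open>auto simp: Q4n_mult_table\<close>)

lemmas Q4n_inv_table = Q4n_inv_rot Q4n_inv_refl Q4n_inv_refl[unfolded One_nat_def]

text \<open>The product rule a^i b^s * a^j b^t = a^(i \<plusminus> j + s t n) b^(s + t), with exponents of a read
  in the integers modulo 2n (the definition of Q4n_mult writes -j as 2n - j).\<close>

lemma int_fst_Q4n_mult:
  assumes "j \<le> 2*n"
  shows "int (fst (Q4n_mult n (i,s) (j,t))) =
    (int i + (if s = 0 then int j else - int j) + (if s = 1 \<and> t = 1 then int n else 0)) mod (2 * int n)"
proof -
  let ?E = "int i + (if s = 0 then int j else - int j) + (if s = 1 \<and> t = 1 then int n else 0)"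
  have "int (i + (if s = 0 then j else 2*n - j) + (if s = 1 \<and> t = 1 then n else 0))
      = ?E + (if s = 0 then 0 else 2 * int n)"
    using assms by (auto simp: of_nat_diff)
  then have "int (fst (Q4n_mult n (i,s) (j,t))) = (?E + (if s = 0 then 0 else 2 * int n)) mod (2 * int n)"
    unfolding Q4n_mult_def fst_conv zmod_int by (simp only: snd_conv of_nat_mult of_nat_numeral)
  then show ?thesis by (cases "s = 0") simp_all
qed

lemma int_fst_Q4n_inv:
  assumes "k < 2*n"
  shows "int (fst (inv\<^bsub>Q4n n\<^esub> (k,0))) = - int k mod (2 * int n)"
    and "int (fst (inv\<^bsub>Q4n n\<^esub> (k,1))) = (int k + int n) mod (2 * int n)"
proof -
  show "int (fst (inv\<^bsub>Q4n n\<^esub> (k,0))) = - int k mod (2 * int n)"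
    using assms by (auto simp: Q4n_inv_table of_nat_diff zmod_zminus1_eq_if mod_pos_pos_trivial)
  have "int k + int n = (int k - int n) + 2 * int n" by simp
  then have "\<not> k < n \<Longrightarrow> (int k + int n) mod (2 * int n) = int k - int n"
    using assms by (simp only: mod_add_self2) (simp add: mod_pos_pos_trivial)
  then show "int (fst (inv\<^bsub>Q4n n\<^esub> (k,1))) = (int k + int n) mod (2 * int n)"
    using assms by (auto simp: Q4n_inv_table of_nat_diff mod_pos_pos_trivial)
qed

lemma mod_add_mod_eq:
  fixes a b c m :: int
  shows "(a mod m + b mod m + c) mod m = (a + b + c) mod m"
    and "(a mod m - b mod m + c) mod m = (a - b + c) mod m"
  by (metis mod_add_eq mod_add_left_eq, metis mod_diff_eq mod_add_left_eq)

lemma Q4n_conjugate: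
  assumes k: "k < 2*n" and i: "i < 2*n" and s: "s \<in> {0,1}" and t: "t \<in> {0,1}"
  defines "h \<equiv> Q4n_mult n (Q4n_mult n (k,s) (i,t)) (inv\<^bsub>Q4n n\<^esub> (k,s))"
  shows "snd h = t"
    and "int (fst h) = ((if s = 0 then int i else - int i) + (if t = 0 then 0 else 2 * int k)) mod (2 * int n)"
proof -
  define x where "x = Q4n_mult n (k,s) (i,t)"
  define y where "y = inv\<^bsub>Q4n n\<^esub> (k,s)"
  have x: "fst x < 2*n" "snd x = (s + t) mod 2"
    "int (fst x) = (int k + (if s = 0 then int i else - int i) + (if s = 1 \<and> t = 1 then int n else 0)) mod (2 * int n)"
    using i k int_fst_Q4n_mult[of i n k s t] by (auto simp: x_def Q4n_mult_def)
  have y: "fst y < 2*n" "snd y = s"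
    "int (fst y) = (if s = 0 then - int k else int k + int n) mod (2 * int n)"
    using k s int_fst_Q4n_inv[OF k] by (auto simp: y_def Q4n_inv_table)
  have h: "h = Q4n_mult n (fst x, snd x) (fst y, s)"
    using y(2) by (metis h_def x_def y_def prod.collapse)
  show "snd h = t" using x s t by (auto simp: h Q4n_mult_def)
  have "int (fst h) = (int (fst x) + (if snd x = 0 then int (fst y) else - int (fst y))
      + (if snd x = 1 \<and> s = 1 then int n else 0)) mod (2 * int n)"
    unfolding h by (rule int_fst_Q4n_mult) (use y in simp)
  also have "\<dots> = ((if s = 0 then int i else - int i) + (if t = 0 then 0 else 2 * int k)) mod (2 * int n)"
    using s t unfolding x(2,3) y(3)
    by (elim insertE emptyE; simp add: mod_add_eq mod_diff_eq mod_add_mod_eq[simplified] flip: diff_conv_add_uminus;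
        simp add: mod_eq_dvd_iff)
  finally show "int (fst h) = ((if s = 0 then int i else - int i) + (if t = 0 then 0 else 2 * int k)) mod (2 * int n)" .
qed

text \<open>Class 0 is the centre, class 1 the other powers of a; the elements a^i b form class 2, split
  off into class 3 for odd i when n is even.\<close>

definition Q4n_class :: "nat \<Rightarrow> nat \<times> nat \<Rightarrow> nat" where
  "Q4n_class n g =
    (if snd g = 0 then (if fst g = 0 \<or> fst g = n then 0 else 1)
     else if odd n \<or> even (fst g) then 2 else 3)"

lemma Q4n_class_less: "Q4n_class n g < (if odd n then 3 else 4)"
  by (simp add: Q4n_class_def)

lemma Q4n_class_conjugate:
  assumes g: "g \<in> carrier (Q4n n)" and "conjugate_in (Q4n n) g h"
  shows "Q4n_class n h = Q4n_class n g"
proof -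
  obtain x where x: "x \<in> carrier (Q4n n)" and h: "h = Q4n_mult n (Q4n_mult n x g) (inv\<^bsub>Q4n n\<^esub> x)"
    using assms(2) unfolding conjugate_in_def by auto
  obtain k s where k: "x = (k,s)" "k < 2*n" "s \<in> {0,1}" using x by auto
  obtain i t where g: "g = (i,t)" "i < 2*n" "t \<in> {0,1}" using assms(1) by auto
  note h_eq = Q4n_conjugate[OF k(2) g(2) k(3) g(3), folded h[unfolded k(1) g(1)]]
  have "fst h < 2*n" using k by (simp add: h Q4n_mult_def)
  then have rot: "(fst h = 0 \<longleftrightarrow> i = 0) \<and> (fst h = n \<longleftrightarrow> i = n)" if "t = 0"
    using h_eq(2) k g that by (auto simp: zmod_zminus1_eq_if mod_pos_pos_trivial of_nat_diff split: if_splits)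
  have refl: "even (fst h) \<longleftrightarrow> even i" if "t = 1"
  proof -
    have "even (fst h) \<longleftrightarrow> even (int (fst h))" by simp
    also have "\<dots> \<longleftrightarrow> even i" using h_eq(2) that by (simp add: dvd_mod_iff)
    finally show ?thesis .
  qed
  show ?thesis
    using rot refl g(1,3) h_eq(1) by (auto simp: Q4n_class_def)
qed

lemma conjugate_in_Q4n_by_rot:
  assumes "k < 2*n" "i < 2*n" "t \<in> {0,1}" "j < 2*n"
    and "int j = (int i + (if t = 0 then 0 else 2 * int k)) mod (2 * int n)"
  shows "conjugate_in (Q4n n) (i,t) (j,t)"
proof -
  let ?h = "Q4n_mult n (Q4n_mult n (k,0) (i,t)) (inv\<^bsub>Q4n n\<^esub> (k,0))"
  have "int (fst ?h) = int j" "snd ?h = t"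
    using Q4n_conjugate[of k n i 0 t] assms by simp_all
  then have "(j,t) = ?h" by (metis nat_int prod.collapse)
  then show ?thesis
    unfolding conjugate_in_def using assms(1) by force
qed

lemma conjugate_in_Q4n_refl: "g \<in> carrier (Q4n n) \<Longrightarrow> conjugate_in (Q4n n) g g"
  by (cases g) (auto intro: conjugate_in_Q4n_by_rot[of 0] simp: mod_pos_pos_trivial)

lemma conjugate_in_Q4n_refl_parity:
  assumes "i < 2*n" "j < 2*n" "even i \<longleftrightarrow> even j"
  shows "conjugate_in (Q4n n) (i,1) (j,1)"
proof -
  define k where "k = (j + 2*n - i) div 2"
  have "2 * k = j + 2*n - i" using assms unfolding k_def by presburger
  then have "int i + 2 * int k = int j + 2 * int n" using assms by linarith
  then have "int j = (int i + 2 * int k) mod (2 * int n)"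
    using assms by (simp add: mod_pos_pos_trivial)
  moreover have "k < 2*n" using assms unfolding k_def by linarith
  ultimately show ?thesis using assms by (intro conjugate_in_Q4n_by_rot) auto
qed

lemma generate_Q4n_rot_subset:
  assumes "k < 2*n" shows "generate (Q4n n) {(k,0)} \<subseteq> {x. snd x = 0}"
proof
  fix x assume "x \<in> generate (Q4n n) {(k,0)}"
  then show "x \<in> {x. snd x = 0}"
    by induction (use assms in \<open>auto simp: Q4n_inv_rot Q4n_mult_def\<close>)
qed

lemma generate_Q4n_refl_subset:
  assumes "k < 2*n" shows "generate (Q4n n) {(k,1)} \<subseteq> {(0,0), (n,0), (k,1), ((k + n) mod (2*n), 1)}"
proof
  fix x assume "x \<in> generate (Q4n n) {(k,1)}"
  then show "x \<in> {(0,0), (n,0), (k,1), ((k + n) mod (2*n), 1)}"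
  proof induction
    case (inv h) then show ?case using assms by (auto simp: Q4n_inv_table mod_eq_if_less_3_mult)
  next
    case (eng h1 h2) then show ?case
      using assms by (elim insertE emptyE) (auto simp: Q4n_mult_table mod_eq_if_less_3_mult)
  qed auto
qed

lemma Q4n_rot_mem_generate: "j < 2*n \<Longrightarrow> (j,0) \<in> generate (Q4n n) {(1,0)}"
proof (induction j)
  case 0 show ?case using generate.one[of "Q4n n" "{(1,0)}"] by simp
next
  case (Suc j)
  have "Q4n_mult n (j,0) (1,0) = (Suc j, 0)" using Suc.prems by (simp add: Q4n_mult_def)
  then show ?case
    using generate.eng[OF Suc.IH generate.incl[of "(1,0)"]] Suc.prems by simp
qed

lemma Q4n_refl_generate:
  assumes "k < 2*n"
  shows "(n,0) \<in> generate (Q4n n) {(k,1)}" and "((k + n) mod (2*n), 1) \<in> generate (Q4n n) {(k,1)}"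
proof -
  have k: "(k,1) \<in> generate (Q4n n) {(k,1)}" by (rule generate.incl) simp
  have "Q4n_mult n (k,1) (k,1) = (n,0)" using assms by (simp add: Q4n_mult_def mod_eq_if_less_3_mult)
  then show n: "(n,0) \<in> generate (Q4n n) {(k,1)}" using generate.eng[OF k k] by simp
  have "Q4n_mult n (n,0) (k,1) = ((k + n) mod (2*n), 1)" by (simp add: Q4n_mult_def add.commute)
  then show "((k + n) mod (2*n), 1) \<in> generate (Q4n n) {(k,1)}" using generate.eng[OF n k] by simp
qed

lemma Q4n_class_related_generate:
  assumes c: "c \<in> carrier (Q4n n)" and "x \<in> generate (Q4n n) {c}" "y \<in> generate (Q4n n) {c}"
  shows "class_related (Q4n_class n x) (Q4n_class n y)"
proof -
  obtain k s where k: "c = (k,s)" "k < 2*n" "s = 0 \<or> s = 1" using c by auto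
  show ?thesis
  proof (cases "s = 0")
    case True
    then have "x \<in> generate (Q4n n) {(k,0)}" "y \<in> generate (Q4n n) {(k,0)}"
      using assms(2,3) k(1) by simp_all
    then have "snd x = 0" "snd y = 0" using generate_Q4n_rot_subset[OF k(2)] by blast+
    then show ?thesis by (simp add: class_related_def Q4n_class_def)
  next
    case False
    then have "x \<in> generate (Q4n n) {(k,1)}" "y \<in> generate (Q4n n) {(k,1)}"
      using assms(2,3) k(1,3) by simp_all
    then have "x \<in> {(0,0), (n,0), (k,1), ((k + n) mod (2*n), 1)}"
      "y \<in> {(0,0), (n,0), (k,1), ((k + n) mod (2*n), 1)}"
      using generate_Q4n_refl_subset[OF k(2)] by blast+
    moreover have "Q4n_class n (0,0) = 0" "Q4n_class n (n,0) = 0"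
      "Q4n_class n ((k + n) mod (2*n), 1) = Q4n_class n (k,1)"
      by (simp_all add: Q4n_class_def dvd_mod_iff)
    ultimately show ?thesis unfolding class_related_def by auto
  qed
qed

lemma conj_super_enh_adj_Q4n_class_related:
  assumes "conj_super_enh_adj (Q4n n) g h"
  shows "class_related (Q4n_class n g) (Q4n_class n h)"
proof -
  have g: "g \<in> carrier (Q4n n)" and h: "h \<in> carrier (Q4n n)"
    using assms unfolding conj_super_enh_adj_def by auto
  from assms consider "conjugate_in (Q4n n) g h"
    | g' h' c where "conjugate_in (Q4n n) g g'" "conjugate_in (Q4n n) h h'" "c \<in> carrier (Q4n n)"
        "g' \<in> generate (Q4n n) {c}" "h' \<in> generate (Q4n n) {c}"
    unfolding conj_super_enh_adj_def enh_power_adj_def by blast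
  then show ?thesis
  proof cases
    case 1 then show ?thesis using Q4n_class_conjugate[OF g] by (simp add: class_related_def)
  next
    case 2 then show ?thesis
      using Q4n_class_conjugate[OF g] Q4n_class_conjugate[OF h] Q4n_class_related_generate by metis
  qed
qed

lemma enh_power_adj_Q4n_centre:
  assumes "Q4n_class n g = 0" and "g \<in> carrier (Q4n n)" "h \<in> carrier (Q4n n)" "g \<noteq> h"
  shows "enh_power_adj (Q4n n) g h"
proof -
  obtain j t where h: "h = (j,t)" "j < 2*n" "t = 0 \<or> t = 1" using assms(3) by auto
  have g: "g = (0,0) \<or> g = (n,0)" using assms(1,2) by (auto simp: Q4n_class_def split: if_splits)
  show ?thesis
  proof (cases "t = 0")
    case True
    then have "g \<in> generate (Q4n n) {(1,0)}" "h \<in> generate (Q4n n) {(1,0)}"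
      using g h Q4n_rot_mem_generate[of _ n] by auto
    then show ?thesis using assms h unfolding enh_power_adj_def by fastforce
  next
    case False
    then have "g \<in> generate (Q4n n) {h}" "h \<in> generate (Q4n n) {h}"
      using g h Q4n_refl_generate(1)[of j n] generate.one[of "Q4n n" "{h}"] generate.incl[of h "{h}"] by auto
    then show ?thesis using assms unfolding enh_power_adj_def by blast
  qed
qed

lemma conj_super_enh_adj_Q4n_refl_same_class:
  assumes i: "i < 2*n" and j: "j < 2*n" and "i \<noteq> j"
    and same: "Q4n_class n (i,1) = Q4n_class n (j,1)"
  shows "conj_super_enh_adj (Q4n n) (i,1) (j,1)"
proof (cases "even i \<longleftrightarrow> even j")
  case True
  then show ?thesis
    using conjugate_in_Q4n_refl_parity[OF i j] assms unfolding conj_super_enh_adj_def by auto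
next
  case False
  \<comment> \<open>Then n is odd, and (j,1) is conjugate to (i,1) a^n, which lies in the cyclic group
    generated by (i,1).\<close>
  define h where "h = ((i + n) mod (2*n), 1::nat)"
  have "odd n" using same False by (auto simp: Q4n_class_def split: if_splits)
  then have "conjugate_in (Q4n n) (j,1) h"
    using False i j unfolding h_def by (intro conjugate_in_Q4n_refl_parity) (auto simp: dvd_mod_iff)
  moreover have "enh_power_adj (Q4n n) (i,1) h"
  proof -
    have "h \<in> generate (Q4n n) {(i,1)}" using Q4n_refl_generate(2)[OF i] by (simp add: h_def)
    moreover have "(i,1) \<in> generate (Q4n n) {(i,1)}" by (rule generate.incl) simp
    moreover have "(i,1) \<in> carrier (Q4n n)" "h \<in> carrier (Q4n n)" "(i,1) \<noteq> h"
      using i by (auto simp: h_def mod_eq_if_less_3_mult)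
    ultimately show ?thesis using i unfolding enh_power_adj_def by blast
  qed
  moreover have "(i,1) \<in> carrier (Q4n n)" "(j,1) \<in> carrier (Q4n n)" using i j by auto
  ultimately show ?thesis
    using assms(3) conjugate_in_Q4n_refl[of "(i,1)" n] unfolding conj_super_enh_adj_def by blast
qed

lemma conj_super_enh_adj_Q4n_if_class_related:
  assumes g: "g \<in> carrier (Q4n n)" and h: "h \<in> carrier (Q4n n)" and "g \<noteq> h"
    and rel: "class_related (Q4n_class n g) (Q4n_class n h)"
  shows "conj_super_enh_adj (Q4n n) g h"
proof -
  have adj_if_enh: "conj_super_enh_adj (Q4n n) g h" if "enh_power_adj (Q4n n) g h"
    using that assms conjugate_in_Q4n_refl unfolding conj_super_enh_adj_def by blast
  obtain i t where gi: "g = (i,t)" "i < 2*n" "t = 0 \<or> t = 1" using g by auto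
  obtain j u where hj: "h = (j,u)" "j < 2*n" "u = 0 \<or> u = 1" using h by auto
  consider "Q4n_class n g = 0" | "Q4n_class n h = 0" | "Q4n_class n g = Q4n_class n h" "t = u" "t = 0"
    | "Q4n_class n g = Q4n_class n h" "t = 1" "u = 1"
    using rel gi hj by (auto simp: class_related_def Q4n_class_def split: if_splits)
  then show ?thesis
  proof cases
    case 1 then show ?thesis using adj_if_enh enh_power_adj_Q4n_centre assms by blast
  next
    case 2 then show ?thesis
      using adj_if_enh enh_power_adj_Q4n_centre[of n h g] assms unfolding enh_power_adj_def by blast
  next
    case 3
    then have "g \<in> generate (Q4n n) {(1,0)}" "h \<in> generate (Q4n n) {(1,0)}"
      using gi hj Q4n_rot_mem_generate by auto
    moreover have "(1,0) \<in> carrier (Q4n n)" using gi(2) by simp presburger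
    ultimately show ?thesis using adj_if_enh assms unfolding enh_power_adj_def by blast
  next
    case 4 then show ?thesis
      using conj_super_enh_adj_Q4n_refl_same_class[of i n j] gi hj assms by simp
  qed
qed

lemma conj_super_enh_adj_Q4n_iff:
  assumes "g \<in> carrier (Q4n n)" "h \<in> carrier (Q4n n)"
  shows "conj_super_enh_adj (Q4n n) g h \<longleftrightarrow> g \<noteq> h \<and> class_related (Q4n_class n g) (Q4n_class n h)"
  using assms conj_super_enh_adj_Q4n_class_related conj_super_enh_adj_Q4n_if_class_related
  unfolding conj_super_enh_adj_def by blast

lemma bij_betw_Q4n_enum: "bij_betw (Q4n_enum n) {..<4*n} (carrier (Q4n n))"
proof (rule bij_betw_byWitness[where f' = "\<lambda>(i,s). i + 2*n*s"])
  show "\<forall>u\<in>{..<4*n}. (\<lambda>(i,s). i + 2*n*s) (Q4n_enum n u) = u"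
    by (simp add: Q4n_enum_def)
  show "\<forall>g\<in>carrier (Q4n n). Q4n_enum n ((\<lambda>(i,s). i + 2*n*s) g) = g"
    by (auto simp: Q4n_enum_def)
  show "Q4n_enum n ` {..<4*n} \<subseteq> carrier (Q4n n)"
  proof (rule image_subsetI)
    fix u assume "u \<in> {..<4*n}"
    then have "u mod (2*n) < 2*n" "u div (2*n) < 2"
      using less_mult_imp_div_less[of u 2 "2*n"] by auto
    then show "Q4n_enum n u \<in> carrier (Q4n n)" by (auto simp: Q4n_enum_def less_2_cases_iff)
  qed
  show "(\<lambda>(i,s). i + 2*n*s) ` carrier (Q4n n) \<subseteq> {..<4*n}"
    by auto
qed

lemma card_Q4n_class_0: "0 < n \<Longrightarrow> card {g \<in> carrier (Q4n n). Q4n_class n g = 0} = 2"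
proof -
  assume "0 < n"
  then have "{g \<in> carrier (Q4n n). Q4n_class n g = 0} = {(0,0), (n,0)}"
    by (auto simp: Q4n_class_def split: if_splits)
  then show ?thesis using \<open>0 < n\<close> by simp
qed

lemma card_Q4n_class_1: "card {g \<in> carrier (Q4n n). Q4n_class n g = 1} = 2*n - 2"
proof -
  have "{g \<in> carrier (Q4n n). Q4n_class n g = 1} = ({0..<2*n} - {0, n}) \<times> {0}"
    by (auto simp: Q4n_class_def split: if_splits)
  then show ?thesis by (cases "n = 0") (simp_all add: card_Diff_subset)
qed

lemma card_Q4n_class_odd: "odd n \<Longrightarrow> card {g \<in> carrier (Q4n n). Q4n_class n g = 2} = 2*n"
proof -
  assume "odd n"
  then have "{g \<in> carrier (Q4n n). Q4n_class n g = 2} = {0..<2*n} \<times> {1}"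
    by (auto simp: Q4n_class_def split: if_splits)
  then show ?thesis by (simp add: card_cartesian_product)
qed

lemma card_Q4n_class_even:
  assumes "even n"
  shows "card {g \<in> carrier (Q4n n). Q4n_class n g = 2} = n"
    and "card {g \<in> carrier (Q4n n). Q4n_class n g = 3} = n"
proof -
  have "{g \<in> carrier (Q4n n). Q4n_class n g = 2} = (\<lambda>t. (2*t, 1)) ` {..<n}"
    using assms by (auto simp: Q4n_class_def image_iff elim!: evenE split: if_splits)
  then show "card {g \<in> carrier (Q4n n). Q4n_class n g = 2} = n"
    by (simp add: card_image inj_on_def)
  have "{g \<in> carrier (Q4n n). Q4n_class n g = 3} = (\<lambda>t. (2*t + 1, 1)) ` {..<n}"
    using assms by (auto simp: Q4n_class_def image_iff elim!: oddE split: if_splits)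
  then show "card {g \<in> carrier (Q4n n). Q4n_class n g = 3} = n"
    by (simp add: card_image inj_on_def)
qed

lemma card_Q4n_enum_class:
  "card {u. u < 4*n \<and> Q4n_class n (Q4n_enum n u) = j} = card {g \<in> carrier (Q4n n). Q4n_class n g = j}"
proof -
  have "bij_betw (Q4n_enum n) {u \<in> {..<4*n}. Q4n_class n (Q4n_enum n u) = j}
      {g \<in> carrier (Q4n n). Q4n_class n g = j}"
    using bij_betw_Q4n_enum by (rule bij_betw_Collect) (rule refl)
  then show ?thesis by (simp add: bij_betw_same_card)
qed

definition Q4n_class_deg :: "nat \<Rightarrow> nat \<Rightarrow> nat" where
  "Q4n_class_deg n c =
    (if c = 0 then 4*n - 1 else if c = 1 then 2*n - 1 else if odd n then 2*n + 1 else n + 1)"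

lemma graph_deg_Q4n:
  assumes g: "g \<in> carrier (Q4n n)"
  shows "graph_deg (carrier (Q4n n)) (conj_super_enh_adj (Q4n n)) g = Q4n_class_deg n (Q4n_class n g)"
proof -
  have n: "0 < n" using g by auto
  have "graph_deg (carrier (Q4n n)) (conj_super_enh_adj (Q4n n)) g =
      (if Q4n_class n g = 0 then 4*n - 1
       else 2 + card {h \<in> carrier (Q4n n). Q4n_class n h = Q4n_class n g} - 1)"
    using graph_deg_class_related[of "carrier (Q4n n)" g "conj_super_enh_adj (Q4n n)" "Q4n_class n"]
      conj_super_enh_adj_Q4n_iff[OF g] g card_Q4n_class_0[OF n]
    by (simp add: card_cartesian_product)
  moreover have "Q4n_class n g \<in> (if odd n then {0,1,2} else {0,1,2,3})"
    using Q4n_class_less[of n g] by (auto split: if_splits)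
  ultimately show ?thesis
    using n card_Q4n_class_1 card_Q4n_class_odd card_Q4n_class_even
    by (auto simp: Q4n_class_deg_def split: if_splits)
qed

lemma sombor_matrix_Q4n:
  "sombor_matrix (4*n) (Q4n_enum n) (carrier (Q4n n)) (conj_super_enh_adj (Q4n n)) =
    mat (4*n) (4*n) (\<lambda>(u,v). if u = v then 0 else
      class_sombor_weight (Q4n_class_deg n) (Q4n_class n (Q4n_enum n u)) (Q4n_class n (Q4n_enum n v)))"
  by (rule sombor_matrix_class_related[OF bij_betw_Q4n_enum conj_super_enh_adj_Q4n_iff graph_deg_Q4n])

lemma char_poly_sombor_Q4n:
  assumes n: "2 \<le> n"
  defines "k \<equiv> if odd n then 3 else 4"
  shows "char_poly (sombor_matrix (4*n) (Q4n_enum n) (carrier (Q4n n)) (conj_super_enh_adj (Q4n n)))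
    = (\<Prod>j<k. [:class_sombor_weight (Q4n_class_deg n) j j, 1:]
              ^ (card {g \<in> carrier (Q4n n). Q4n_class n g = j} - 1))
      * char_poly (class_quotient_mat (4*n) (\<lambda>u. Q4n_class n (Q4n_enum n u)) k
          (class_sombor_weight (Q4n_class_deg n)))"
proof -
  have "\<exists>u<4*n. Q4n_class n (Q4n_enum n u) = j" if "j < k" for j
  proof -
    have "card {g \<in> carrier (Q4n n). Q4n_class n g = j} > 0"
      using that n card_Q4n_class_0 card_Q4n_class_1 card_Q4n_class_odd card_Q4n_class_even
      by (auto simp: k_def less_Suc_eq numeral_eq_Suc split: if_splits)
    then show ?thesis unfolding card_Q4n_enum_class[symmetric] by (auto simp: card_gt_0_iff)
  qed
  then show ?thesis
    unfolding sombor_matrix_Q4n card_Q4n_enum_class[symmetric]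
    using Q4n_class_less by (intro char_poly_class_constant) (auto simp: k_def)
qed

lemma class_sombor_weight_Q4n_diag:
  assumes "1 \<le> n"
  shows "class_sombor_weight (Q4n_class_deg n) 0 0 = (4 * real n - 1) * sqrt 2"
    and "class_sombor_weight (Q4n_class_deg n) 1 1 = (2 * real n - 1) * sqrt 2"
    and "2 \<le> c \<Longrightarrow> class_sombor_weight (Q4n_class_deg n) c c
      = (if odd n then 2 * real n + 1 else real n + 1) * sqrt 2"
  using assms by (simp_all add: class_sombor_weight_diag Q4n_class_deg_def of_nat_diff)

lemma class_sombor_weight_Q4n_centre_sq:
  assumes "1 \<le> n"
  shows "class_sombor_weight (Q4n_class_deg n) 0 1 * class_sombor_weight (Q4n_class_deg n) 0 1
      = (4 * real n - 1) ^ 2 + (2 * real n - 1) ^ 2"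
    and "2 \<le> c \<Longrightarrow> class_sombor_weight (Q4n_class_deg n) 0 c * class_sombor_weight (Q4n_class_deg n) 0 c
      = (4 * real n - 1) ^ 2 + (if odd n then 2 * real n + 1 else real n + 1) ^ 2"
  using assms by (simp_all add: class_sombor_weight_centre_sq Q4n_class_deg_def of_nat_diff)

lemma Q4n_CSEPG_spectrum_split:
  assumes n: "2 \<le> n"
  defines "k \<equiv> if odd n then 3 else 4"
  shows "Q4n_CSEPG_spectrum n =
    (\<Sum>j<k. replicate_mset (card {g \<in> carrier (Q4n n). Q4n_class n g = j} - 1)
              (- class_sombor_weight (Q4n_class_deg n) j j))
    + proots (char_poly (class_quotient_mat (4*n) (\<lambda>u. Q4n_class n (Q4n_enum n u)) k
        (class_sombor_weight (Q4n_class_deg n))))"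
proof -
  have "char_poly (class_quotient_mat (4*n) (\<lambda>u. Q4n_class n (Q4n_enum n u)) k
      (class_sombor_weight (Q4n_class_deg n))) \<noteq> 0"
    by (rule char_poly_neq_0[of _ k]) (simp add: class_quotient_mat_def)
  then show ?thesis
    unfolding Q4n_CSEPG_spectrum_def sombor_spectrum_def char_poly_sombor_Q4n[OF n] k_def
    by (simp add: proots_prod_linear_powers_mult)
qed

lemma char_poly_Q4n_quotient_odd:
  assumes n: "2 \<le> n" and odd: "odd n"
  shows "char_poly (class_quotient_mat (4*n) (\<lambda>u. Q4n_class n (Q4n_enum n u)) 3
      (class_sombor_weight (Q4n_class_deg n))) =
    [:- (4 * real n - 1) * sqrt 2, 1:]
      * [:- (2 * real n - 1) * (2 * real n - 3) * sqrt 2, 1:]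
      * [:- (2 * real n - 1) * (2 * real n + 1) * sqrt 2, 1:]
    - [: 8 * (real n - 1) * (10 * real n ^ 2 - 6 * real n + 1) :]
      * [:- (2 * real n - 1) * (2 * real n + 1) * sqrt 2, 1:]
    - [: 8 * real n * (10 * real n ^ 2 - 2 * real n + 1) :]
      * [:- (2 * real n - 1) * (2 * real n - 3) * sqrt 2, 1:]"
  (is "char_poly ?B = ?P")
proof (rule poly_eqI_cofinite[of "{}"])
  fix x :: real
  let ?W = "class_sombor_weight (Q4n_class_deg n)"
  let ?s = "\<lambda>j. card {u. u < 4*n \<and> Q4n_class n (Q4n_enum n u) = j}"
  have s: "?s 0 = 2" "?s 1 = 2*n - 2" "?s 2 = 2*n"
    using n odd card_Q4n_class_0 card_Q4n_class_1 card_Q4n_class_odd by (auto simp: card_Q4n_enum_class)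
  have W: "?W 0 0 = (4 * real n - 1) * sqrt 2" "?W 1 1 = (2 * real n - 1) * sqrt 2"
    "?W 2 2 = (2 * real n + 1) * sqrt 2"
    using n odd class_sombor_weight_Q4n_diag[of n] by simp_all
  define w1 where "w1 = ?W 0 1"
  define w2 where "w2 = ?W 0 2"
  have w: "w1 * w1 = (4 * real n - 1) ^ 2 + (2 * real n - 1) ^ 2"
    "w2 * w2 = (4 * real n - 1) ^ 2 + (2 * real n + 1) ^ 2"
    using n odd class_sombor_weight_Q4n_centre_sq[of n] unfolding w1_def w2_def by simp_all
  have Wo: "?W 0 1 = w1" "?W 1 0 = w1" "?W 0 2 = w2" "?W 2 0 = w2" "?W 1 2 = 0" "?W 2 1 = 0"
    unfolding w1_def w2_def by (simp_all add: class_sombor_weight_sym[of _ 0] class_sombor_weight_unrelated)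
  have "poly (char_poly ?B) x
      = det (mat 3 3 (\<lambda>(i,j). (if i = j then x else 0) - ?W i j * real (?s j - (if i = j then 1 else 0))))"
    by (subst char_poly_matrix[of _ 3])
       (auto simp: class_quotient_mat_def char_matrix_def intro!: arg_cong[of _ _ det] eq_matI)
  also have "\<dots> = (x - (4 * real n - 1) * sqrt 2) * (x - (2 * real n - 1) * (2 * real n - 3) * sqrt 2)
        * (x - (2 * real n - 1) * (2 * real n + 1) * sqrt 2)
      - w1 * w1 * (4 * real n - 4) * (x - (2 * real n - 1) * (2 * real n + 1) * sqrt 2)
      - w2 * w2 * (4 * real n) * (x - (2 * real n - 1) * (2 * real n - 3) * sqrt 2)"
    unfolding det_mat_3 using s n
    by (simp add: W Wo W[unfolded One_nat_def] Wo[unfolded One_nat_def] of_nat_diff algebra_simps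
        mult.assoc[symmetric, of "sqrt 2" "sqrt 2"])
  also have "\<dots> = poly ?P x"
    unfolding w by (simp add: algebra_simps power2_eq_square)
  finally show "poly (char_poly ?B) x = poly ?P x" .
qed simp

lemma char_poly_Q4n_quotient_even:
  assumes n: "2 \<le> n" and even: "even n"
  shows "char_poly (class_quotient_mat (4*n) (\<lambda>u. Q4n_class n (Q4n_enum n u)) 4
      (class_sombor_weight (Q4n_class_deg n))) =
    [:- ((real n ^ 2 - 1) * sqrt 2), 1:] *
    ([:- (4 * real n - 1) * sqrt 2, 1:]
      * [:- (real n - 1) * (real n + 1) * sqrt 2, 1:]
      * [:- (2 * real n - 1) * (2 * real n - 3) * sqrt 2, 1:]
    - [: 8 * (real n - 1) * (10 * real n ^ 2 - 6 * real n + 1) :]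
      * [:- (real n - 1) * (real n + 1) * sqrt 2, 1:]
    - [: 4 * real n * (17 * real n ^ 2 - 6 * real n + 2) :]
      * [:- (2 * real n - 3) * (2 * real n - 1) * sqrt 2, 1:])"
  (is "char_poly ?B = [:- ?d, 1:] * ?P")
proof (rule poly_eqI_cofinite[of "{}"])
  fix x :: real
  let ?W = "class_sombor_weight (Q4n_class_deg n)"
  let ?s = "\<lambda>j. card {u. u < 4*n \<and> Q4n_class n (Q4n_enum n u) = j}"
  have s: "?s 0 = 2" "?s 1 = 2*n - 2" "?s 2 = n" "?s 3 = n"
    using n even card_Q4n_class_0 card_Q4n_class_1 card_Q4n_class_even by (auto simp: card_Q4n_enum_class)
  have W: "?W 0 0 = (4 * real n - 1) * sqrt 2" "?W 1 1 = (2 * real n - 1) * sqrt 2"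
    "?W 2 2 = (real n + 1) * sqrt 2" "?W 3 3 = (real n + 1) * sqrt 2"
    using n even class_sombor_weight_Q4n_diag[of n] by simp_all
  define w1 where "w1 = ?W 0 1"
  define w2 where "w2 = ?W 0 2"
  define w3 where "w3 = ?W 0 3"
  have w: "w1 * w1 = (4 * real n - 1) ^ 2 + (2 * real n - 1) ^ 2"
    "w2 * w2 = (4 * real n - 1) ^ 2 + (real n + 1) ^ 2"
    "w3 * w3 = (4 * real n - 1) ^ 2 + (real n + 1) ^ 2"
    using n even class_sombor_weight_Q4n_centre_sq[of n] unfolding w1_def w2_def w3_def by simp_all
  have Wo: "?W 0 1 = w1" "?W 1 0 = w1" "?W 0 2 = w2" "?W 2 0 = w2" "?W 0 3 = w3" "?W 3 0 = w3"
    "?W 1 2 = 0" "?W 2 1 = 0" "?W 1 3 = 0" "?W 3 1 = 0" "?W 2 3 = 0" "?W 3 2 = 0"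
    unfolding w1_def w2_def w3_def
    by (simp_all add: class_sombor_weight_sym[of _ 0] class_sombor_weight_unrelated)
  have "poly (char_poly ?B) x
      = det (mat 4 4 (\<lambda>(i,j). (if i = j then x else 0) - ?W i j * real (?s j - (if i = j then 1 else 0))))"
    by (subst char_poly_matrix[of _ 4])
       (auto simp: class_quotient_mat_def char_matrix_def intro!: arg_cong[of _ _ det] eq_matI)
  also have "\<dots> = (x - ?d)
      * ((x - (4 * real n - 1) * sqrt 2) * (x - (2 * real n - 1) * (2 * real n - 3) * sqrt 2) * (x - ?d)
        - w1 * w1 * (4 * real n - 4) * (x - ?d)
        - (w2 * w2 + w3 * w3) * (2 * real n) * (x - (2 * real n - 1) * (2 * real n - 3) * sqrt 2))"
    using s n
    by (subst det_arrow_mat_4)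
      (simp_all add: W Wo W[unfolded One_nat_def] Wo[unfolded One_nat_def] of_nat_diff algebra_simps
        power2_eq_square mult.assoc[symmetric, of "sqrt 2" "sqrt 2"])
  also have "\<dots> = poly ([:- ?d, 1:] * ?P) x"
    unfolding w by (simp add: algebra_simps power2_eq_square mult.assoc[symmetric, of "sqrt 2" "sqrt 2"])
  finally show "poly (char_poly ?B) x = poly ([:- ?d, 1:] * ?P) x" .
qed simp

lemma Q4n_CSEPG_spectrum_odd:
  assumes n: "2 \<le> n" and odd: "odd n"
  shows "Q4n_CSEPG_spectrum n =
      replicate_mset 1 (- (4 * real n - 1) * sqrt 2)
    + replicate_mset (2*n - 3) (- (2 * real n - 1) * sqrt 2)
    + replicate_mset (2*n - 1) (- (2 * real n + 1) * sqrt 2)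
    + proots (char_poly (class_quotient_mat (4*n) (\<lambda>u. Q4n_class n (Q4n_enum n u)) 3
        (class_sombor_weight (Q4n_class_deg n))))"
proof -
  have sum3: "(\<Sum>j<3. f j) = f 0 + f 1 + f 2" for f :: "nat \<Rightarrow> real multiset"
    by (simp add: eval_nat_numeral)
  have "class_sombor_weight (Q4n_class_deg n) 2 2 = (2 * real n + 1) * sqrt 2"
    using odd class_sombor_weight_Q4n_diag(3)[of n 2] n by simp
  then show ?thesis
    using odd n card_Q4n_class_0 card_Q4n_class_1 card_Q4n_class_odd class_sombor_weight_Q4n_diag(1,2)[of n]
    unfolding Q4n_CSEPG_spectrum_split[OF n] if_P[OF odd] sum3
    by (simp add: minus_mult_left del: mult_minus_left)
qed

lemma Q4n_CSEPG_spectrum_even: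
  assumes n: "2 \<le> n" and even: "even n"
  shows "Q4n_CSEPG_spectrum n =
      replicate_mset 1 (- (4 * real n - 1) * sqrt 2)
    + replicate_mset (2*n - 3) (- (2 * real n - 1) * sqrt 2)
    + replicate_mset (2*n - 2) (- (real n + 1) * sqrt 2)
    + proots (char_poly (class_quotient_mat (4*n) (\<lambda>u. Q4n_class n (Q4n_enum n u)) 4
        (class_sombor_weight (Q4n_class_deg n))))"
proof -
  have sum4: "(\<Sum>j<4. f j) = f 0 + f 1 + f 2 + f 3" for f :: "nat \<Rightarrow> real multiset"
    by (simp add: eval_nat_numeral)
  have "class_sombor_weight (Q4n_class_deg n) c c = (real n + 1) * sqrt 2" if "c \<in> {2,3}" for c
    using even class_sombor_weight_Q4n_diag(3)[of n c] n that by auto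
  moreover have "replicate_mset (n - 1) a + replicate_mset (n - 1) a = replicate_mset (2*n - 2) a"
    for a :: real
    by (rule multiset_eqI) (use n in auto)
  ultimately show ?thesis
    using even n card_Q4n_class_0 card_Q4n_class_1 card_Q4n_class_even class_sombor_weight_Q4n_diag(1,2)[of n]
    unfolding Q4n_CSEPG_spectrum_split[OF n] if_not_P[OF not_not[THEN iffD2, OF even]] sum4
    by (simp add: minus_mult_left add.assoc del: mult_minus_left)
qed

theorem corollary5p7:
  fixes n :: nat
  assumes "n \<ge> 2"
  shows "(odd n \<longrightarrow> Q4n_CSEPG_spectrum n =
           replicate_mset 1 (- (4 * real n - 1) * sqrt 2)
         + replicate_mset (2*n - 3) (- (2 * real n - 1) * sqrt 2)
         + replicate_mset (2*n - 1) (- (2 * real n + 1) * sqrt 2)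
         + proots ([:- (4 * real n - 1) * sqrt 2, 1:]
                     * [:- (2 * real n - 1) * (2 * real n - 3) * sqrt 2, 1:]
                     * [:- (2 * real n - 1) * (2 * real n + 1) * sqrt 2, 1:]
                   - [: 8 * (real n - 1) * (10 * real n ^ 2 - 6 * real n + 1) :]
                     * [:- (2 * real n - 1) * (2 * real n + 1) * sqrt 2, 1:]
                   - [: 8 * real n * (10 * real n ^ 2 - 2 * real n + 1) :]
                     * [:- (2 * real n - 1) * (2 * real n - 3) * sqrt 2, 1:]))
       \<and> (even n \<longrightarrow> Q4n_CSEPG_spectrum n =
           replicate_mset 1 (- (4 * real n - 1) * sqrt 2)
         + replicate_mset (2*n - 3) (- (2 * real n - 1) * sqrt 2)
         + replicate_mset (2*n - 2) (- (real n + 1) * sqrt 2)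
         + replicate_mset 1 ((real n ^ 2 - 1) * sqrt 2)
         + proots ([:- (4 * real n - 1) * sqrt 2, 1:]
                     * [:- (real n - 1) * (real n + 1) * sqrt 2, 1:]
                     * [:- (2 * real n - 1) * (2 * real n - 3) * sqrt 2, 1:]
                   - [: 8 * (real n - 1) * (10 * real n ^ 2 - 6 * real n + 1) :]
                     * [:- (real n - 1) * (real n + 1) * sqrt 2, 1:]
                   - [: 4 * real n * (17 * real n ^ 2 - 6 * real n + 2) :]
                     * [:- (2 * real n - 3) * (2 * real n - 1) * sqrt 2, 1:]))"
proof -
  let ?B = "class_quotient_mat (4*n) (\<lambda>u. Q4n_class n (Q4n_enum n u)) 4 (class_sombor_weight (Q4n_class_deg n))"
  show ?thesis
    apply (intro conjI impI)
    subgoal premises odd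
      unfolding Q4n_CSEPG_spectrum_odd[OF assms odd] char_poly_Q4n_quotient_odd[OF assms odd] ..
    subgoal premises even
    proof -
      have "char_poly ?B \<noteq> 0" by (rule char_poly_neq_0[of _ 4]) (simp add: class_quotient_mat_def)
      note factors = this[unfolded char_poly_Q4n_quotient_even[OF assms even] mult_eq_0_iff de_Morgan_disj]
      show ?thesis
        unfolding Q4n_CSEPG_spectrum_even[OF assms even] char_poly_Q4n_quotient_even[OF assms even]
          proots_mult[OF factors[THEN conjunct1] factors[THEN conjunct2]]
        by (simp add: add.assoc)
    qed
    done
qed

end
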